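(* Consider $\min_{x\in\mathbb{R}^d} F(x):=f(x)+r(x)$ with $f=\frac1n\sum_{i=1}^n f_i$, each $f_i$ differentiable with $\|\nabla f_i(x)\|\le G_i$ and $\|\nabla f_i(x)-\nabla f_i(y)\|\le L_i\|x-y\|$ for all $x,y$, $r:\mathbb{R}^d\to\mathbb{R}$ possibly non-convex and non-smooth with existing proximal mapping, and $F$ attaining its minimum $F(x^* )$. Let $\tilde L=\frac1n\sum_i L_i>0$. Fix a proper sampling with marginals $p_i$ and a vector $v\in\mathbb{R}^n$ with $\mathbf{P}-pp^\top\preceq \mathrm{Diag}(p_1v_1,\dots,p_nv_n)$, and let $Q=\sum_{i=1}^n\frac{v_iL_i^2}{p_in^2}$. Run ProxSARAH-AS with $\mathcal J$ outer loops, $m$ inner loops, initial point $\tilde x^1$ and stepsize $\eta=\frac{1}{4\tilde L+2mQ/\tilde L}$. Then $$\frac{1}{m\mathcal J}\sum_{j=1}^{\mathcal J}\sum_{t=1}^m E\big[\mathrm{dist}(0,\hat\partial F(x_{t+1}^{(j)}))^2\big]\le \frac{1}{m\mathcal J}\Big(24\tilde L+\frac{4mQ}{\tilde L}\Big)\Delta,$$ where $\Delta=F(\tilde x^1)-F(x^* )$.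
   Context: $\mathrm{prox}_{\eta r}(y)=\arg\min_x\{\frac{1}{2\eta}\|x-y\|^2+r(x)\}$ (assumed nonempty; any element is used). A sampling is a random subset $S\subseteq[n]$; $p_i=\mathrm{Prob}(i\in S)>0$ (proper), $\mathbf P_{ij}=\mathrm{Prob}(\{i,j\}\subseteq S)$, $p=(p_1,\dots,p_n)^\top$, and $\preceq$ is the positive semidefinite order. ProxSARAH-AS: for $j=1,\dots,\mathcal J$: set $x_0^{(j)}=\tilde x^{(j)}$, $\mathcal V_0^{(j)}=\frac1n\sum_{i=1}^n\nabla f_i(x_0^{(j)})$, $x_1^{(j)}=x_0^{(j)}$; for $t=1,\dots,m$: draw $S_t^{(j)}$ from the sampling independently of all past randomness, set $\mathcal V_t^{(j)}=\sum_{i\in S_t^{(j)}}\frac{1}{np_i}(\nabla f_i(x_t^{(j)})-\nabla f_i(x_{t-1}^{(j)}))+\mathcal V_{t-1}^{(j)}$ and $x_{t+1}^{(j)}\in\mathrm{prox}_{\eta r}(x_t^{(j)}-\eta\mathcal V_t^{(j)})$; then $\tilde x^{(j+1)}=x_{m+1}^{(j)}$. The Fréchet subdifferential is $\hat\partial F(x)=\{v:\liminf_{\bar x\to x}\frac{F(\bar x)-F(x)-v^\top(\bar x-x)}{\|\bar x-x\|}\ge0\}$ and $\mathrm{dist}(0,A)=\inf_{v\in A}\|v\|$. *)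

theory Defs
  imports "HOL-Analysis.Analysis" "HOL-Probability.Probability"
begin

definition frechet_subdiff :: "('a::real_inner \<Rightarrow> real) \<Rightarrow> 'a \<Rightarrow> 'a set" where
  "frechet_subdiff F x = {v. Liminf (at x) (\<lambda>y. ereal ((F y - F x - inner v (y - x)) / norm (y - x))) \<ge> 0}"

(* dist(0,A) = inf_{v in A} ||v||, valued in [0,\<infinity>] (so dist(0,{}) = \<infinity>) *)
definition dist0 :: "'a::real_normed_vector set \<Rightarrow> ennreal" where
  "dist0 A = (INF v\<in>A. ennreal (norm v))"

definition prox_set :: "real \<Rightarrow> ('a::real_normed_vector \<Rightarrow> real) \<Rightarrow> 'a \<Rightarrow> 'a set" where
  "prox_set \<eta> r y = {x. \<forall>z. (1 / (2*\<eta>)) * (norm (x - y))^2 + r x \<le> (1 / (2*\<eta>)) * (norm (z - y))^2 + r z}"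

definition samp_p :: "nat set pmf \<Rightarrow> nat \<Rightarrow> real" where
  "samp_p Sd i = measure_pmf.prob Sd {S. i \<in> S}"

definition samp_P :: "nat set pmf \<Rightarrow> nat \<Rightarrow> nat \<Rightarrow> real" where
  "samp_P Sd i j = measure_pmf.prob Sd {S. {i, j} \<subseteq> S}"

definition psd_le :: "nat \<Rightarrow> (nat \<Rightarrow> nat \<Rightarrow> real) \<Rightarrow> (nat \<Rightarrow> nat \<Rightarrow> real) \<Rightarrow> bool" where
  "psd_le n A B \<longleftrightarrow> (\<forall>h::nat \<Rightarrow> real. (\<Sum>i<n. \<Sum>j<n. h i * (B i j - A i j) * h j) \<ge> 0)"

(* Inner loop of ProxSARAH-AS.  g i = gradient of f_i, px = prox selection,
   \<sigma> t = sampled set S_t (t \<ge> 1).  After t steps the state is (x_{t+1}, x_t, V_t). *)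
primrec sarah_inner ::
  "(nat \<Rightarrow> 'a::real_normed_vector \<Rightarrow> 'a) \<Rightarrow> nat \<Rightarrow> (nat \<Rightarrow> real) \<Rightarrow> real \<Rightarrow> ('a \<Rightarrow> 'a)
   \<Rightarrow> (nat \<Rightarrow> nat set) \<Rightarrow> 'a \<Rightarrow> nat \<Rightarrow> 'a \<times> 'a \<times> 'a" where
  "sarah_inner g n p \<eta> px \<sigma> x0 0 = (x0, x0, (1 / real n) *\<^sub>R (\<Sum>i<n. g i x0))"
| "sarah_inner g n p \<eta> px \<sigma> x0 (Suc t) =
     (case sarah_inner g n p \<eta> px \<sigma> x0 t of (xc, xp, V) \<Rightarrow>
        let V' = (\<Sum>i\<in>\<sigma> (Suc t). (1 / (real n * p i)) *\<^sub>R (g i xc - g i xp)) + V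
        in (px (xc - \<eta> *\<^sub>R V'), xc, V'))"

(* Outer loop: sarah_outer ... j = \<tilde>x^{(j+1)}; the sample S_t^{(j)} is \<omega> ((j-1)*m + (t-1)). *)
primrec sarah_outer ::
  "(nat \<Rightarrow> 'a::real_normed_vector \<Rightarrow> 'a) \<Rightarrow> nat \<Rightarrow> (nat \<Rightarrow> real) \<Rightarrow> real \<Rightarrow> ('a \<Rightarrow> 'a)
   \<Rightarrow> nat \<Rightarrow> (nat \<Rightarrow> nat set) \<Rightarrow> 'a \<Rightarrow> nat \<Rightarrow> 'a" where
  "sarah_outer g n p \<eta> px m \<omega> x1 0 = x1"
| "sarah_outer g n p \<eta> px m \<omega> x1 (Suc j) =
     fst (sarah_inner g n p \<eta> px (\<lambda>t. \<omega> (j * m + (t - 1))) (sarah_outer g n p \<eta> px m \<omega> x1 j) m)"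

(* x_{t+1}^{(j)} for j \<ge> 1, t \<ge> 1 *)
definition sarah_iter ::
  "(nat \<Rightarrow> 'a::real_normed_vector \<Rightarrow> 'a) \<Rightarrow> nat \<Rightarrow> (nat \<Rightarrow> real) \<Rightarrow> real \<Rightarrow> ('a \<Rightarrow> 'a)
   \<Rightarrow> nat \<Rightarrow> (nat \<Rightarrow> nat set) \<Rightarrow> 'a \<Rightarrow> nat \<Rightarrow> nat \<Rightarrow> 'a" where
  "sarah_iter g n p \<eta> px m \<omega> x1 j t =
     fst (sarah_inner g n p \<eta> px (\<lambda>s. \<omega> ((j - 1) * m + (s - 1)))
            (sarah_outer g n p \<eta> px m \<omega> x1 (j - 1)) t)"

end

theory Submission
  imports Defs
begin

text \<open>
  Write K = 1/\<eta>, d_t = x_{t+1} - x_t and e_t = V_t - \<nabla>f(x_t), and let L be the mean of the L_i.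
  Optimality of the proximal point together with the L-smoothness of f gives the decrease
  F(x_{t+1}) \<le> F(x_t) - \<langle>d_t, e_t\<rangle> - (K - L)/2 |d_t|^2 and the explicit Frechet subgradient
  w_t = \<nabla>f(x_{t+1}) - V_t - K d_t of F at x_{t+1}. Given the past, one SARAH update is an
  arbitrary-sampling estimate of a gradient difference, and the ESO inequality bounds its variance:
  E|e_{t+1}|^2 \<le> E|e_t|^2 + Q E|d_t|^2. Since e_0 = 0, the estimator error accumulated over an
  epoch is at most m Q \<Sum> E|d_t|^2, which the choice K = 4L + 2mQ/L lets the decrease absorb.
  What is left is \<Sum>_t E|w_t|^2 \<le> (24L + 4mQ/L) (E F(x^(j)) - E F(x^(j+1))) for every epoch j,
  and these bounds telescope.
\<close>

section \<open>Smooth functions and proximal gradient steps\<close>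

lemma lipschitz_gradient_taylor_bound:
  fixes \<phi> :: "'a::real_inner \<Rightarrow> real" and G :: "'a \<Rightarrow> 'a"
  assumes der: "\<And>x. (\<phi> has_derivative (\<lambda>h. inner (G x) h)) (at x)"
    and lip: "\<And>x y. norm (G x - G y) \<le> c * norm (x - y)"
  shows "\<bar>\<phi> y - \<phi> x - inner (G x) (y - x)\<bar> \<le> c / 2 * (norm (y - x))^2"
proof -
  define d where "d = y - x"
  define \<psi> where "\<psi> s = \<phi> (x + s *\<^sub>R d) - s * inner (G x) d" for s :: real
  have \<psi>_deriv: "(\<psi> has_real_derivative inner (G (x + s *\<^sub>R d) - G x) d) (at s)" for s
  proof -
    have "((\<lambda>s. \<phi> (x + s *\<^sub>R d)) has_derivative (\<lambda>h. inner (G (x + s *\<^sub>R d)) (h *\<^sub>R d))) (at s)"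
      by (rule has_derivative_compose[OF _ der]) (auto intro!: derivative_eq_intros)
    then have comp: "((\<lambda>s. \<phi> (x + s *\<^sub>R d)) has_real_derivative inner (G (x + s *\<^sub>R d)) d) (at s)"
      unfolding has_field_derivative_def
      by (rule has_derivative_eq_rhs) (auto simp: fun_eq_iff)
    show ?thesis unfolding \<psi>_def
      by (rule derivative_eq_intros comp | simp add: inner_diff_left)+
  qed
  have slope_bound: "\<bar>inner (G (x + s *\<^sub>R d) - G x) d\<bar> \<le> c * s * (norm d)^2" if "s \<ge> 0" for s
  proof -
    have "\<bar>inner (G (x + s *\<^sub>R d) - G x) d\<bar> \<le> norm (G (x + s *\<^sub>R d) - G x) * norm d"
      by (rule Cauchy_Schwarz_ineq2)
    also have "\<dots> \<le> c * norm (s *\<^sub>R d) * norm d"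
      using lip[of "x + s *\<^sub>R d" x] by (intro mult_right_mono) auto
    also have "\<dots> = c * s * (norm d)^2" using that by (simp add: power2_eq_square)
    finally show ?thesis .
  qed
  \<comment> \<open>Mean value theorem for \<open>\<sigma> \<psi> s - c s\<^sup>2 \<parallel>d\<parallel>\<^sup>2 / 2\<close>, whose derivative is \<open>\<le> 0\<close>, once for each sign \<open>\<sigma>\<close>.\<close>
  have "\<sigma> * (\<psi> 1 - \<psi> 0) \<le> c / 2 * (norm d)^2" if \<sigma>: "\<bar>\<sigma>\<bar> = 1" for \<sigma> :: real
  proof -
    define \<theta> where "\<theta> s = \<sigma> * \<psi> s - c * s^2 / 2 * (norm d)^2" for s
    have "(\<theta> has_real_derivative \<sigma> * inner (G (x + s *\<^sub>R d) - G x) d - c * s * (norm d)^2) (at s)" for s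
      unfolding \<theta>_def by (rule derivative_eq_intros \<psi>_deriv refl | simp)+
    from MVT2[of 0 1 \<theta>, OF _ this] obtain z where
      "0 < z" "\<theta> 1 - \<theta> 0 = \<sigma> * inner (G (x + z *\<^sub>R d) - G x) d - c * z * (norm d)^2"
      by auto
    moreover have "\<sigma> * inner (G (x + z *\<^sub>R d) - G x) d \<le> c * z * (norm d)^2"
    proof -
      have "\<sigma> * inner (G (x + z *\<^sub>R d) - G x) d \<le> \<bar>\<sigma> * inner (G (x + z *\<^sub>R d) - G x) d\<bar>"
        by (rule abs_ge_self)
      also have "\<dots> \<le> c * z * (norm d)^2"
        using slope_bound[of z] \<open>0 < z\<close> \<sigma> by (simp add: abs_mult)
      finally show ?thesis .
    qed
    ultimately show ?thesis unfolding \<theta>_def by (simp add: algebra_simps)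
  qed
  from this[of 1] this[of "-1"] show ?thesis
    unfolding \<psi>_def d_def abs_le_iff by simp
qed

lemma frechet_subdiff_quadratic_minorant:
  fixes F :: "'a::real_inner \<Rightarrow> real"
  assumes minorant: "\<And>z. F z - F x - inner w (z - x) \<ge> - K * (norm (z - x))^2"
  shows "w \<in> frechet_subdiff F x"
proof (cases "at x = (bot :: 'a filter)")
  case True
  then show ?thesis by (simp add: frechet_subdiff_def)
next
  case False
  have "\<forall>\<^sub>F z in at x. ereal (- K * norm (z - x)) \<le> ereal ((F z - F x - inner w (z - x)) / norm (z - x))"
    unfolding eventually_at_filter
  proof (intro always_eventually allI impI)
    fix z assume "z \<noteq> x"
    then show "ereal (- K * norm (z - x)) \<le> ereal ((F z - F x - inner w (z - x)) / norm (z - x))"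
      using minorant[of z] by (simp add: field_simps power2_eq_square)
  qed
  then have "Liminf (at x) (\<lambda>z. ereal (- K * norm (z - x))) \<le>
      Liminf (at x) (\<lambda>z. ereal ((F z - F x - inner w (z - x)) / norm (z - x)))"
    by (rule Liminf_mono)
  moreover have "Liminf (at x) (\<lambda>z. ereal (- K * norm (z - x))) = ereal 0"
    using False by (intro lim_imp_Liminf tendsto_ereal tendsto_eq_intros) auto
  ultimately show ?thesis
    unfolding frechet_subdiff_def zero_ereal_def by simp
qed

lemma prox_set_lower_bound:
  fixes r :: "'a::real_inner \<Rightarrow> real"
  assumes xp: "xp \<in> prox_set \<eta> r y" and \<eta>: "\<eta> > 0"
  shows "r z \<ge> r xp - inner (xp - y) (z - xp) / \<eta> - (norm (z - xp))^2 / (2 * \<eta>)"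
proof -
  have "z - y = (z - xp) + (xp - y)" by simp
  then have "(norm (z - y))^2 = (norm (z - xp))^2 + 2 * inner (xp - y) (z - xp) + (norm (xp - y))^2"
    by (metis (no_types) power2_norm_eq_inner inner_add_left inner_add_right inner_commute mult_2 add.assoc)
  moreover have "(1 / (2*\<eta>)) * (norm (xp - y))^2 + r xp \<le> (1 / (2*\<eta>)) * (norm (z - y))^2 + r z"
    using xp unfolding prox_set_def by blast
  ultimately show ?thesis
    using \<eta> by (simp add: field_simps)
qed

lemma prox_gradient_step_decrease:
  fixes f r :: "'a::real_inner \<Rightarrow> real"
  assumes smooth: "f xp \<le> f x + inner (G x) (xp - x) + L / 2 * (norm (xp - x))^2"
    and xp: "xp \<in> prox_set \<eta> r (x - \<eta> *\<^sub>R V)" and \<eta>: "\<eta> > 0"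
  shows "f xp + r xp \<le> f x + r x - inner (xp - x) (V - G x) - (1 / (2*\<eta>) - L / 2) * (norm (xp - x))^2"
proof -
  have "inner (xp - (x - \<eta> *\<^sub>R V)) (x - xp) = - \<eta> * inner (xp - x) V - (norm (xp - x))^2"
    by (simp add: power2_norm_eq_inner inner_diff_left inner_diff_right inner_commute algebra_simps)
  then have "inner (xp - (x - \<eta> *\<^sub>R V)) (x - xp) / \<eta> + (norm (x - xp))^2 / (2 * \<eta>)
      = - inner (xp - x) V - (norm (xp - x))^2 / (2 * \<eta>)"
    using \<eta> by (simp add: norm_minus_commute field_simps)
  moreover have "inner (xp - x) (V - G x) = inner (xp - x) V - inner (G x) (xp - x)"
    by (simp add: inner_diff_right inner_commute)
  moreover have "(1 / (2*\<eta>) - L / 2) * (norm (xp - x))^2 = (norm (xp - x))^2 / (2 * \<eta>) - L / 2 * (norm (xp - x))^2"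
    by (simp add: left_diff_distrib)
  ultimately show ?thesis
    using prox_set_lower_bound[OF xp \<eta>, of x] smooth by linarith
qed

lemma prox_gradient_step_subgradient:
  fixes f r :: "'a::real_inner \<Rightarrow> real"
  assumes smooth: "\<And>z. f z \<ge> f xp + inner (G xp) (z - xp) - L / 2 * (norm (z - xp))^2"
    and xp: "xp \<in> prox_set \<eta> r (x - \<eta> *\<^sub>R V)" and \<eta>: "\<eta> > 0"
  shows "G xp - V - (1 / \<eta>) *\<^sub>R (xp - x) \<in> frechet_subdiff (\<lambda>z. f z + r z) xp"
proof (rule frechet_subdiff_quadratic_minorant)
  fix z
  have "(1 / \<eta>) *\<^sub>R (xp - (x - \<eta> *\<^sub>R V)) = V + (1 / \<eta>) *\<^sub>R (xp - x)"
    using \<eta> by (simp add: algebra_simps)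
  then have "inner (xp - (x - \<eta> *\<^sub>R V)) (z - xp) / \<eta> = inner (V + (1 / \<eta>) *\<^sub>R (xp - x)) (z - xp)"
    by (metis inner_scaleR_left mult.commute times_divide_eq_right mult_1)
  moreover have "inner (G xp - V - (1 / \<eta>) *\<^sub>R (xp - x)) (z - xp)
      = inner (G xp) (z - xp) - inner (V + (1 / \<eta>) *\<^sub>R (xp - x)) (z - xp)"
    by (simp add: inner_diff_left inner_add_left)
  moreover have "(L / 2 + 1 / (2 * \<eta>)) * (norm (z - xp))^2 = L / 2 * (norm (z - xp))^2 + (norm (z - xp))^2 / (2 * \<eta>)"
    by (simp add: distrib_right)
  ultimately show "f z + r z - (f xp + r xp) - inner (G xp - V - (1 / \<eta>) *\<^sub>R (xp - x)) (z - xp)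
      \<ge> - (L / 2 + 1 / (2 * \<eta>)) * (norm (z - xp))^2"
    using smooth[of z] prox_set_lower_bound[OF xp \<eta>, of z] by linarith
qed

lemma dist0_power2_le:
  assumes "w \<in> A"
  shows "(dist0 A)^2 \<le> ennreal ((norm w)^2)"
proof -
  have "dist0 A \<le> ennreal (norm w)" unfolding dist0_def using assms by (rule INF_lower)
  then have "(dist0 A)^2 \<le> (ennreal (norm w))^2" by (rule power_mono) simp
  then show ?thesis by (simp add: ennreal_power)
qed

section \<open>Variance of an arbitrary sampling estimator\<close>

lemma psd_le_diag_inner_form:
  fixes x :: "nat \<Rightarrow> 'a::euclidean_space"
  assumes "psd_le n A (\<lambda>i j. if i = j then c i else 0)"
  shows "(\<Sum>i<n. \<Sum>j<n. A i j * inner (x i) (x j)) \<le> (\<Sum>i<n. c i * (norm (x i))^2)"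
proof -
  have coordinate: "(\<Sum>i<n. \<Sum>j<n. A i j * (inner (x i) u * inner (x j) u))
      \<le> (\<Sum>i<n. c i * (inner (x i) u * inner (x i) u))" for u
  proof -
    define h where "h i = inner (x i) u" for i
    have diag: "(\<Sum>j<n. h i * (if i = j then c i else 0) * h j) = c i * (h i * h i)" if "i < n" for i
    proof -
      have "(\<Sum>j<n. h i * (if i = j then c i else 0) * h j) = (\<Sum>j<n. if j = i then c i * (h i * h i) else 0)"
        by (intro sum.cong) auto
      then show ?thesis using that by simp
    qed
    have "0 \<le> (\<Sum>i<n. \<Sum>j<n. h i * ((if i = j then c i else 0) - A i j) * h j)"
      using assms unfolding psd_le_def by blast
    also have "\<dots> = (\<Sum>i<n. \<Sum>j<n. h i * (if i = j then c i else 0) * h j) - (\<Sum>i<n. \<Sum>j<n. A i j * (h i * h j))"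
      by (simp add: right_diff_distrib left_diff_distrib sum_subtractf mult_ac)
    also have "(\<Sum>i<n. \<Sum>j<n. h i * (if i = j then c i else 0) * h j) = (\<Sum>i<n. c i * (h i * h i))"
      by (rule sum.cong[OF refl]) (simp add: diag)
    finally show ?thesis unfolding h_def by simp
  qed
  have "(\<Sum>i<n. \<Sum>j<n. A i j * inner (x i) (x j)) = (\<Sum>u\<in>Basis. \<Sum>i<n. \<Sum>j<n. A i j * (inner (x i) u * inner (x j) u))"
    by (simp add: euclidean_inner[of "x _" "x _"] sum_distrib_left sum.swap[of _ Basis])
  also have "\<dots> \<le> (\<Sum>u\<in>Basis. \<Sum>i<n. c i * (inner (x i) u * inner (x i) u))"
    by (intro sum_mono coordinate)
  also have "\<dots> = (\<Sum>i<n. c i * inner (x i) (x i))"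
    by (simp add: euclidean_inner[of "x _" "x _"] sum_distrib_left sum.swap[of _ Basis])
  also have "\<dots> = (\<Sum>i<n. c i * (norm (x i))^2)"
    by (simp add: power2_norm_eq_inner)
  finally show ?thesis .
qed

lemma psd_le_diag_entry:
  assumes "psd_le n A (\<lambda>i j. if i = j then c i else 0)" and "i < n"
  shows "A i i \<le> c i"
  using psd_le_diag_inner_form[OF assms(1), of "\<lambda>j. if j = i then 1 else 0 :: real"] assms(2)
  by (simp add: if_distrib[of "\<lambda>y. y * _"] if_distrib[of "\<lambda>y. _ * y"] if_distrib[of "\<lambda>y. y ^ 2"]
      sum.delta' cong: if_cong)

lemma samp_P_diag: "samp_P Sd i i = samp_p Sd i"
  by (simp add: samp_P_def samp_p_def)

lemma eso_weight_nonneg: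
  assumes proper: "samp_p Sd i > 0"
    and ESO: "psd_le n (\<lambda>i j. samp_P Sd i j - samp_p Sd i * samp_p Sd j)
                       (\<lambda>i j. if i = j then samp_p Sd i * v i else 0)"
    and "i < n"
  shows "v i \<ge> 0"
proof -
  have "samp_p Sd i * (1 - samp_p Sd i) \<le> samp_p Sd i * v i"
    using psd_le_diag_entry[OF ESO \<open>i < n\<close>] by (simp add: samp_P_diag algebra_simps)
  moreover have "samp_p Sd i \<le> 1" unfolding samp_p_def by simp
  ultimately show ?thesis
    using proper by (smt (verit) mult_le_cancel_left_pos)
qed

lemma sampling_estimator_variance:
  fixes b :: "nat \<Rightarrow> 'a::euclidean_space" and e :: 'a and Sd :: "nat set pmf"
  assumes sub: "set_pmf Sd \<subseteq> Pow {..<n}" and proper: "\<And>i. i < n \<Longrightarrow> samp_p Sd i > 0"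
    and ESO: "psd_le n (\<lambda>i j. samp_P Sd i j - samp_p Sd i * samp_p Sd j)
                       (\<lambda>i j. if i = j then samp_p Sd i * v i else 0)"
  shows "measure_pmf.expectation Sd (\<lambda>S. (norm (e + ((\<Sum>i\<in>S. (1 / (real n * samp_p Sd i)) *\<^sub>R b i)
            - (1 / real n) *\<^sub>R (\<Sum>i<n. b i))))^2)
     \<le> (norm e)^2 + (\<Sum>i<n. v i * (norm (b i))^2 / (samp_p Sd i * (real n)^2))"
proof -
  define p where "p = samp_p Sd"
  define \<beta> where "\<beta> i = (1 / real n) *\<^sub>R b i" for i
  define ind where "ind i S = (if i \<in> S then 1 else 0 :: real)" for i and S :: "nat set"
  define c where "c i S = ind i S / p i - 1" for i S
  have "finite (set_pmf Sd)"
    using sub by (rule finite_subset) simp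
  then have [simp]: "integrable (measure_pmf Sd) h" for h :: "nat set \<Rightarrow> real"
    by (rule integrable_measure_pmf_finite)
  have E_ind: "measure_pmf.expectation Sd (ind i) = p i" for i
  proof -
    have "ind i = indicator {S. i \<in> S}" by (auto simp: ind_def fun_eq_iff)
    then show ?thesis by (simp add: p_def samp_p_def)
  qed
  have E_ind2: "measure_pmf.expectation Sd (\<lambda>S. ind i S * ind j S) = samp_P Sd i j" for i j
  proof -
    have "(\<lambda>S. ind i S * ind j S) = indicator {S. {i, j} \<subseteq> S}" by (auto simp: ind_def fun_eq_iff)
    then show ?thesis by (simp add: samp_P_def)
  qed
  have E_c: "measure_pmf.expectation Sd (c i) = 0" if "i < n" for i
  proof -
    have "measure_pmf.expectation Sd (c i) = measure_pmf.expectation Sd (ind i) / p i - 1"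
      unfolding c_def by simp
    then show ?thesis using proper[OF that] by (simp add: E_ind p_def)
  qed
  have E_cc: "measure_pmf.expectation Sd (\<lambda>S. c i S * c j S) = samp_P Sd i j / (p i * p j) - 1"
    if "i < n" "j < n" for i j
  proof -
    have "(\<lambda>S. c i S * c j S) = (\<lambda>S. ind i S * ind j S / (p i * p j) - ind i S / p i - ind j S / p j + 1)"
      using proper[OF that(1)] proper[OF that(2)] by (auto simp: c_def fun_eq_iff field_simps p_def)
    then show ?thesis
      using proper[OF that(1)] proper[OF that(2)] by (simp add: E_ind E_ind2 p_def)
  qed
  have centred: "(\<Sum>i\<in>S. (1 / (real n * samp_p Sd i)) *\<^sub>R b i) - (1 / real n) *\<^sub>R (\<Sum>i<n. b i)
      = (\<Sum>i<n. c i S *\<^sub>R \<beta> i)" if "S \<subseteq> {..<n}" for S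
  proof -
    have "(\<Sum>i\<in>S. (1 / (real n * samp_p Sd i)) *\<^sub>R b i) = (\<Sum>i\<in>{..<n} \<inter> S. (1 / (real n * samp_p Sd i)) *\<^sub>R b i)"
      using that by (simp add: Int_absorb1)
    also have "\<dots> = (\<Sum>i<n. (ind i S / p i) *\<^sub>R \<beta> i)"
      by (subst sum.inter_restrict) (auto intro!: sum.cong simp: ind_def p_def \<beta>_def)
    finally have "(\<Sum>i\<in>S. (1 / (real n * samp_p Sd i)) *\<^sub>R b i) = (\<Sum>i<n. (ind i S / p i) *\<^sub>R \<beta> i)" .
    moreover have "(\<Sum>i<n. c i S *\<^sub>R \<beta> i) = (\<Sum>i<n. (ind i S / p i) *\<^sub>R \<beta> i) - (\<Sum>i<n. \<beta> i)"
      by (simp add: c_def scaleR_diff_left sum_subtractf)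
    moreover have "(\<Sum>i<n. \<beta> i) = (1 / real n) *\<^sub>R (\<Sum>i<n. b i)"
      by (simp add: \<beta>_def scaleR_sum_right)
    ultimately show ?thesis by simp
  qed
  have expand: "(norm (e + (\<Sum>i<n. c i S *\<^sub>R \<beta> i)))^2 = (norm e)^2
      + 2 * (\<Sum>i<n. c i S * inner e (\<beta> i)) + (\<Sum>i<n. \<Sum>j<n. c i S * c j S * inner (\<beta> i) (\<beta> j))" for S
    by (simp add: power2_norm_eq_inner inner_add_left inner_add_right inner_sum_left inner_sum_right
        inner_commute sum_distrib_left algebra_simps sum.distrib)
  have rescaled: "(samp_P Sd i j / (p i * p j) - 1) * inner (\<beta> i) (\<beta> j)
      = (samp_P Sd i j - p i * p j) * inner ((1 / p i) *\<^sub>R \<beta> i) ((1 / p j) *\<^sub>R \<beta> j)"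
    if "i < n" "j < n" for i j
    using proper[OF that(1)] proper[OF that(2)] by (simp add: p_def field_simps)
  have "measure_pmf.expectation Sd (\<lambda>S. (norm (e + ((\<Sum>i\<in>S. (1 / (real n * samp_p Sd i)) *\<^sub>R b i)
            - (1 / real n) *\<^sub>R (\<Sum>i<n. b i))))^2)
      = measure_pmf.expectation Sd (\<lambda>S. (norm e)^2 + 2 * (\<Sum>i<n. c i S * inner e (\<beta> i))
          + (\<Sum>i<n. \<Sum>j<n. c i S * c j S * inner (\<beta> i) (\<beta> j)))"
    using sub by (intro integral_cong_AE) (auto simp: AE_measure_pmf_iff centred expand)
  also have "\<dots> = (norm e)^2 + (\<Sum>i<n. \<Sum>j<n. (samp_P Sd i j / (p i * p j) - 1) * inner (\<beta> i) (\<beta> j))"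
    by (simp add: integral_sum E_c E_cc)
  also have "\<dots> = (norm e)^2 + (\<Sum>i<n. \<Sum>j<n. (samp_P Sd i j - p i * p j)
      * inner ((1 / p i) *\<^sub>R \<beta> i) ((1 / p j) *\<^sub>R \<beta> j))"
    by (simp add: rescaled)
  also have "\<dots> \<le> (norm e)^2 + (\<Sum>i<n. p i * v i * (norm ((1 / p i) *\<^sub>R \<beta> i))^2)"
    unfolding p_def by (rule add_left_mono[OF psd_le_diag_inner_form[OF ESO]])
  also have "\<dots> = (norm e)^2 + (\<Sum>i<n. v i * (norm (b i))^2 / (samp_p Sd i * (real n)^2))"
    using proper by (auto intro!: sum.cong simp: p_def \<beta>_def power2_eq_square field_simps)
  finally show ?thesis .
qed

section \<open>Integrating out one coordinate of a product distribution\<close>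

lemma nn_integral_measure_pmf_swap:
  "(\<integral>\<^sup>+y. \<integral>\<^sup>+x. h x y \<partial>measure_pmf P \<partial>measure_pmf D) = (\<integral>\<^sup>+x. \<integral>\<^sup>+y. h x y \<partial>measure_pmf D \<partial>measure_pmf P)"
proof -
  have "(\<integral>\<^sup>+y. \<integral>\<^sup>+x. h x y \<partial>measure_pmf P \<partial>measure_pmf D) = (\<integral>\<^sup>+z. h (snd z) (fst z) \<partial>measure_pmf (pair_pmf D P))"
    by (simp add: nn_integral_pair_pmf')
  also have "\<dots> = (\<integral>\<^sup>+z. h (fst z) (snd z) \<partial>measure_pmf (pair_pmf P D))"
    by (subst pair_commute_pmf) (simp add: case_prod_beta)
  also have "\<dots> = (\<integral>\<^sup>+x. \<integral>\<^sup>+y. h x y \<partial>measure_pmf D \<partial>measure_pmf P)"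
    by (simp add: nn_integral_pair_pmf')
  finally show ?thesis .
qed

lemma nn_integral_Pi_pmf_fresh_coordinate:
  fixes \<phi> :: "('i \<Rightarrow> 'b) \<Rightarrow> 'b \<Rightarrow> ennreal"
  assumes fin: "finite A" and k: "k \<in> A" and fresh: "\<And>\<omega> y. \<phi> (fun_upd \<omega> k y) = \<phi> \<omega>"
  shows "(\<integral>\<^sup>+\<omega>. \<phi> \<omega> (\<omega> k) \<partial>measure_pmf (Pi_pmf A dflt (\<lambda>_. D)))
       = (\<integral>\<^sup>+\<omega>. (\<integral>\<^sup>+S. \<phi> \<omega> S \<partial>measure_pmf D) \<partial>measure_pmf (Pi_pmf A dflt (\<lambda>_. D)))"
proof -
  define B where "B = A - {k}"
  have "A = insert k B" "k \<notin> B" "finite B" using k fin by (auto simp: B_def)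
  then have split: "Pi_pmf A dflt (\<lambda>_. D) = map_pmf (\<lambda>(y, \<omega>). fun_upd \<omega> k y) (pair_pmf D (Pi_pmf B dflt (\<lambda>_. D)))"
    using Pi_pmf_insert[of B k dflt "\<lambda>_. D"] by simp
  have "(\<integral>\<^sup>+\<omega>. \<phi> \<omega> (\<omega> k) \<partial>measure_pmf (Pi_pmf A dflt (\<lambda>_. D)))
      = (\<integral>\<^sup>+y. \<integral>\<^sup>+\<omega>. \<phi> \<omega> y \<partial>measure_pmf (Pi_pmf B dflt (\<lambda>_. D)) \<partial>measure_pmf D)"
    unfolding split by (simp add: nn_integral_pair_pmf' fresh)
  also have "\<dots> = (\<integral>\<^sup>+\<omega>. \<integral>\<^sup>+y. \<phi> \<omega> y \<partial>measure_pmf D \<partial>measure_pmf (Pi_pmf B dflt (\<lambda>_. D)))"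
    by (rule nn_integral_measure_pmf_swap)
  also have "\<dots> = (\<integral>\<^sup>+y. \<integral>\<^sup>+\<omega>. (\<integral>\<^sup>+S. \<phi> \<omega> S \<partial>measure_pmf D) \<partial>measure_pmf (Pi_pmf B dflt (\<lambda>_. D)) \<partial>measure_pmf D)"
    by (simp add: measure_pmf.emeasure_space_1)
  also have "\<dots> = (\<integral>\<^sup>+\<omega>. (\<integral>\<^sup>+S. \<phi> \<omega> S \<partial>measure_pmf D) \<partial>measure_pmf (Pi_pmf A dflt (\<lambda>_. D)))"
    unfolding split by (simp add: nn_integral_pair_pmf' fresh)
  finally show ?thesis .
qed

section \<open>Inequalities for one inner step and one epoch\<close>

lemma abs_inner_le_weighted:
  fixes a b :: "'a::real_inner"
  assumes k: "k > 0"
  shows "2 * \<bar>inner a b\<bar> \<le> k * (norm a)^2 + (norm b)^2 / k"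
proof -
  have "0 \<le> (k * norm a - norm b)^2" by simp
  then have "2 * (norm a * norm b) \<le> k * (norm a)^2 + (norm b)^2 / k"
    using k by (simp add: power2_eq_square field_simps)
  moreover have "\<bar>inner a b\<bar> \<le> norm a * norm b" by (rule Cauchy_Schwarz_ineq2)
  ultimately show ?thesis by linarith
qed

lemma norm_diff_power2_le_weighted:
  fixes u a :: "'a::real_inner"
  assumes k: "k > 0"
  shows "(norm (u - a))^2 \<le> (1 + k) * (norm a)^2 + (1 + 1 / k) * (norm u)^2"
proof -
  have "(norm (u - a))^2 = (norm u)^2 - 2 * inner a u + (norm a)^2"
    by (simp add: power2_norm_eq_inner inner_diff_left inner_diff_right inner_commute)
  then show ?thesis
    using abs_inner_le_weighted[OF k, of a u] by (simp add: algebra_simps)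
qed

lemma step_gain_lower_bound:
  fixes d e :: "'a::real_inner"
  assumes L: "L > 0"
    and decrease: "F' \<le> F - inner d e - (K / 2 - L / 2) * (norm d)^2"
  shows "F - F' \<ge> - ((norm e)^2 / (2 * L)) + (K / 2 - L) * (norm d)^2"
  using abs_inner_le_weighted[OF L, of d e] decrease by (simp add: field_simps)

lemma step_subgradient_bound:
  fixes d e u :: "'a::real_inner"
  assumes K: "K > 0" and L: "L > 0"
    and decrease: "F' \<le> F - inner d e - (K / 2 - L / 2) * (norm d)^2"
    and u: "norm u \<le> L * norm d"
  shows "(norm (u - (e + K *\<^sub>R d)))^2 \<le> (1 + L / K) * ((norm e)^2 + 2 * K * (F - F') + L * K * (norm d)^2)
            + (1 + K / L) * L^2 * (norm d)^2"
proof -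
  have "(norm (e + K *\<^sub>R d))^2 = (norm e)^2 + 2 * K * inner d e + K^2 * (norm d)^2"
    unfolding power2_norm_eq_inner
    by (simp add: inner_add_left inner_add_right inner_commute power2_eq_square algebra_simps)
  also have "\<dots> \<le> (norm e)^2 + 2 * K * (F - F') + L * K * (norm d)^2"
    using mult_left_mono[OF decrease, of "2 * K"] K by (simp add: power2_eq_square algebra_simps)
  finally have "(1 + L / K) * (norm (e + K *\<^sub>R d))^2 \<le> (1 + L / K) * ((norm e)^2 + 2 * K * (F - F') + L * K * (norm d)^2)"
    using K L by (intro mult_left_mono) auto
  moreover have "(1 + K / L) * (norm u)^2 \<le> (1 + K / L) * (L^2 * (norm d)^2)"
    using u K L by (intro mult_left_mono) (auto simp flip: power_mult_distrib intro: power_mono)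
  moreover have "(norm (u - (e + K *\<^sub>R d)))^2 \<le> (1 + L / K) * (norm (e + K *\<^sub>R d))^2 + (1 + K / L) * (norm u)^2"
    using norm_diff_power2_le_weighted[of "L / K" u "e + K *\<^sub>R d"] K L by simp
  ultimately show ?thesis by (simp add: mult.assoc)
qed

lemma stepsize_gain_bound:
  fixes L q K a D \<delta> :: real
  assumes L: "L > 0" and K: "K = 4 * L + 2 * q / L"
    and a: "a \<le> q * D" and gain: "\<delta> \<ge> - (a / (2 * L)) + (K / 2 - L) * D"
  shows "K * D \<le> 4 * \<delta>"
proof -
  \<comment> \<open>With this \<open>K\<close> the variance term \<open>a / (2L) \<le> q D / (2L)\<close> uses up at most \<open>(K - 4L) D / 4\<close> of the gain.\<close>
  have q_eq: "q = L * (K - 4 * L) / 2" using K L by (simp add: field_simps)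
  have "a / (2 * L) \<le> (K - 4 * L) * D / 4"
    using divide_right_mono[OF a, of "2 * L"] L by (simp add: q_eq field_simps)
  moreover have "(K - 4 * L) * D / 4 = K * D / 4 - L * D" "(K / 2 - L) * D = K * D / 2 - L * D"
    by (simp_all add: field_simps)
  ultimately show ?thesis using gain by linarith
qed

lemma epoch_residual_arith:
  fixes L q K a D \<delta> W :: real
  assumes L: "L > 0" and q: "q \<ge> 0" and K: "K = 4 * L + 2 * q / L"
    and D: "D \<ge> 0" and a: "a \<ge> 0" "a \<le> q * D"
    and gain: "\<delta> \<ge> - (a / (2 * L)) + (K / 2 - L) * D"
    and W: "W \<le> (1 + L / K) * (a + 2 * K * \<delta> + L * K * D) + (1 + K / L) * L^2 * D"
  shows "W \<le> (24 * L + 4 * q / L) * \<delta>"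
proof -
  have KD: "K * D \<le> 4 * \<delta>" by (rule stepsize_gain_bound[OF L K a(2) gain])
  have K_ge: "K \<ge> 4 * L" using K L q by simp
  then have K_pos: "K > 0" using L by simp
  have "0 \<le> K * D" using K_pos D by simp
  then have "0 \<le> \<delta>" using KD by linarith
  have LD: "L * D \<le> \<delta>" using mult_right_mono[OF K_ge D] KD by linarith
  have "q = L * K / 2 - 2 * L^2" using K L by (simp add: field_simps power2_eq_square)
  then have "q * D \<le> L * K / 2 * D" using D by (intro mult_right_mono) auto
  moreover have "L / 2 * (K * D) \<le> L / 2 * (4 * \<delta>)" using KD L by (intro mult_left_mono) auto
  ultimately have aL: "a \<le> 2 * L * \<delta>" using a(2) by simp
  have LKD: "L * (K * D) \<le> L * (4 * \<delta>)" using KD L by (intro mult_left_mono) auto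
  have "(1 + L / K) * (a + L * K * D) \<le> (5 / 4) * (a + L * K * D)"
    using K_ge K_pos L a(1) D by (intro mult_right_mono) (auto simp: field_simps)
  also have "\<dots> \<le> (5 / 4) * (2 * L * \<delta> + L * (4 * \<delta>))"
    using aL LKD by (simp add: mult.assoc)
  finally have first: "(1 + L / K) * (a + L * K * D) \<le> (5 / 4) * (2 * L * \<delta> + L * (4 * \<delta>))" .
  have second: "(1 + L / K) * (2 * K * \<delta>) = 2 * K * \<delta> + 2 * L * \<delta>"
    using K_pos by (simp add: field_simps)
  have third: "L * (L * D) \<le> L * \<delta>" using LD L by (intro mult_left_mono) auto
  have "W \<le> (1 + L / K) * (a + L * K * D) + (1 + L / K) * (2 * K * \<delta>) + L * (L * D) + L * (K * D)"
    using W L by (simp add: algebra_simps power2_eq_square)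
  also have "\<dots> \<le> (5 / 4) * (2 * L * \<delta> + L * (4 * \<delta>)) + (2 * K * \<delta> + 2 * L * \<delta>) + L * \<delta> + L * (4 * \<delta>)"
    using first second third LKD by linarith
  also have "\<dots> = (2 * K + 29 / 2 * L) * \<delta>" by (simp add: algebra_simps)
  also have "\<dots> \<le> (2 * K + 16 * L) * \<delta>"
    using L \<open>0 \<le> \<delta>\<close> by (intro mult_right_mono) auto
  finally show ?thesis using K by simp
qed

section \<open>The iterates of ProxSARAH-AS\<close>

lemma sarah_inner_cong:
  assumes "\<And>s. 1 \<le> s \<Longrightarrow> s \<le> t \<Longrightarrow> \<sigma> s = \<sigma>' s"
  shows "sarah_inner g n p \<eta> px \<sigma> x0 t = sarah_inner g n p \<eta> px \<sigma>' x0 t"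
  using assms by (induction t) (auto split: prod.split)

lemma sarah_outer_cong:
  assumes "\<And>i. i < j * m \<Longrightarrow> \<omega> i = \<omega>' i"
  shows "sarah_outer g n p \<eta> px m \<omega> x1 j = sarah_outer g n p \<eta> px m \<omega>' x1 j"
  using assms
proof (induction j)
  case (Suc j)
  then have "sarah_outer g n p \<eta> px m \<omega> x1 j = sarah_outer g n p \<eta> px m \<omega>' x1 j" by simp
  moreover have "sarah_inner g n p \<eta> px (\<lambda>t. \<omega> (j * m + (t - 1))) x0 m
      = sarah_inner g n p \<eta> px (\<lambda>t. \<omega>' (j * m + (t - 1))) x0 m" for x0
    using Suc.prems by (intro sarah_inner_cong) auto
  ultimately show ?case by simp
qed simp

locale prox_sarah =
  fixes n m J :: nat
    and f :: "nat \<Rightarrow> 'a::euclidean_space \<Rightarrow> real"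
    and g :: "nat \<Rightarrow> 'a \<Rightarrow> 'a"
    and L v :: "nat \<Rightarrow> real"
    and r :: "'a \<Rightarrow> real"
    and px :: "'a \<Rightarrow> 'a"
    and Sd :: "nat set pmf"
    and x1 :: 'a
    and F :: "'a \<Rightarrow> real"
    and Lt Q \<eta> :: real
  assumes grad: "\<And>i x. i < n \<Longrightarrow> (f i has_derivative (\<lambda>h. inner (g i x) h)) (at x)"
    and lip: "\<And>i x y. i < n \<Longrightarrow> norm (g i x - g i y) \<le> L i * norm (x - y)"
    and F_def: "F = (\<lambda>x. (1 / real n) * (\<Sum>i<n. f i x) + r x)"
    and Lt_def: "Lt = (1 / real n) * (\<Sum>i<n. L i)"
    and Lt_pos: "Lt > 0"
    and samp_sub: "set_pmf Sd \<subseteq> Pow {..<n}"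
    and proper: "\<And>i. i < n \<Longrightarrow> samp_p Sd i > 0"
    and ESO: "psd_le n (\<lambda>i j. samp_P Sd i j - samp_p Sd i * samp_p Sd j)
                       (\<lambda>i j. if i = j then samp_p Sd i * v i else 0)"
    and Q_def: "Q = (\<Sum>i<n. v i * (L i)^2 / (samp_p Sd i * (real n)^2))"
    and eta_def: "\<eta> = 1 / (4 * Lt + 2 * real m * Q / Lt)"
    and prox: "\<And>y. px y \<in> prox_set \<eta> r y"
begin

definition K :: real where "K = 4 * Lt + 2 * real m * Q / Lt"
definition grad_f :: "'a \<Rightarrow> 'a" where "grad_f x = (1 / real n) *\<^sub>R (\<Sum>i<n. g i x)"
definition f_avg :: "'a \<Rightarrow> real" where "f_avg x = (1 / real n) * (\<Sum>i<n. f i x)"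
definition snapshot :: "(nat \<Rightarrow> nat set) \<Rightarrow> nat \<Rightarrow> 'a" where
  "snapshot \<omega> j = sarah_outer g n (samp_p Sd) \<eta> px m \<omega> x1 j"
definition state :: "nat \<Rightarrow> nat \<Rightarrow> (nat \<Rightarrow> nat set) \<Rightarrow> 'a \<times> 'a \<times> 'a" where
  "state j t \<omega> =
  sarah_inner g n (samp_p Sd) \<eta> px (\<lambda>s. \<omega> ((j - 1) * m + (s - 1))) (snapshot \<omega> (j - 1)) t"

text \<open>
  On the sample path \<open>\<omega>\<close>, \<open>X j t \<omega>\<close>, \<open>Y j t \<omega>\<close> and \<open>V j t \<omega>\<close> are the paper's x_{t+1}, x_t and
  V_t in epoch j, and \<open>snapshot \<omega> j\<close> is the starting point of epoch j + 1.
\<close>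

definition X :: "nat \<Rightarrow> nat \<Rightarrow> (nat \<Rightarrow> nat set) \<Rightarrow> 'a" where "X j t \<omega> = fst (state j t \<omega>)"
definition Y :: "nat \<Rightarrow> nat \<Rightarrow> (nat \<Rightarrow> nat set) \<Rightarrow> 'a" where "Y j t \<omega> = fst (snd (state j t \<omega>))"
definition V :: "nat \<Rightarrow> nat \<Rightarrow> (nat \<Rightarrow> nat set) \<Rightarrow> 'a" where "V j t \<omega> = snd (snd (state j t \<omega>))"
definition e :: "nat \<Rightarrow> nat \<Rightarrow> (nat \<Rightarrow> nat set) \<Rightarrow> 'a" where "e j t \<omega> = V j t \<omega> - grad_f (Y j t \<omega>)"
definition d :: "nat \<Rightarrow> nat \<Rightarrow> (nat \<Rightarrow> nat set) \<Rightarrow> 'a" where "d j t \<omega> = X j t \<omega> - Y j t \<omega>"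
definition w :: "nat \<Rightarrow> nat \<Rightarrow> (nat \<Rightarrow> nat set) \<Rightarrow> 'a" where "w j t \<omega> = grad_f (X j t \<omega>) - V j t \<omega> - K *\<^sub>R d j t \<omega>"

lemma v_nonneg: "i < n \<Longrightarrow> v i \<ge> 0"
  using eso_weight_nonneg[OF proper ESO] .

lemma Q_nonneg: "Q \<ge> 0"
  unfolding Q_def using v_nonneg proper by (intro sum_nonneg) (auto intro!: divide_nonneg_pos)

lemma K_pos: "K > 0"
  unfolding K_def using Lt_pos Q_nonneg by (simp add: add_pos_nonneg)

lemma eta_eq: "\<eta> = 1 / K"
  unfolding K_def eta_def ..

lemma eta_pos: "\<eta> > 0"
  using K_pos eta_eq by simp

lemma inverse_eta: "1 / \<eta> = K" "1 / (2 * \<eta>) = K / 2"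
  using K_pos by (simp_all add: eta_eq)

lemma F_eq: "F = (\<lambda>z. f_avg z + r z)"
  unfolding F_def f_avg_def ..

lemma f_avg_taylor_bound: "\<bar>f_avg y - f_avg x - inner (grad_f x) (y - x)\<bar> \<le> Lt / 2 * (norm (y - x))^2"
proof -
  have "inner (grad_f x) (y - x) = (1 / real n) * (\<Sum>i<n. inner (g i x) (y - x))"
    by (simp add: grad_f_def inner_sum_left)
  then have "f_avg y - f_avg x - inner (grad_f x) (y - x) = (1 / real n) * (\<Sum>i<n. f i y - f i x - inner (g i x) (y - x))"
    by (simp add: f_avg_def sum_subtractf right_diff_distrib)
  then have "\<bar>f_avg y - f_avg x - inner (grad_f x) (y - x)\<bar> = (1 / real n) * \<bar>\<Sum>i<n. f i y - f i x - inner (g i x) (y - x)\<bar>"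
    by (simp add: abs_mult)
  also have "\<dots> \<le> (1 / real n) * (\<Sum>i<n. L i / 2 * (norm (y - x))^2)"
    by (intro mult_left_mono order.trans[OF sum_abs] sum_mono lipschitz_gradient_taylor_bound)
      (auto intro: grad lip)
  also have "\<dots> = Lt / 2 * (norm (y - x))^2"
    by (simp add: Lt_def sum_distrib_right[symmetric] sum_divide_distrib[symmetric])
  finally show ?thesis .
qed

lemma grad_f_lipschitz: "norm (grad_f x - grad_f y) \<le> Lt * norm (x - y)"
proof -
  have "norm (grad_f x - grad_f y) = (1 / real n) * norm (\<Sum>i<n. g i x - g i y)"
    by (simp add: grad_f_def sum_subtractf flip: scaleR_diff_right)
  also have "\<dots> \<le> (1 / real n) * (\<Sum>i<n. L i * norm (x - y))"
    by (intro mult_left_mono order.trans[OF norm_sum] sum_mono lip) auto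
  also have "\<dots> = Lt * norm (x - y)" by (simp add: Lt_def sum_distrib_right)
  finally show ?thesis .
qed

lemma state_Suc: "state j (Suc t) \<omega> =
   (let V' = (\<Sum>i\<in>\<omega> ((j - 1) * m + t). (1 / (real n * samp_p Sd i)) *\<^sub>R (g i (X j t \<omega>) - g i (Y j t \<omega>))) + V j t \<omega>
    in (px (X j t \<omega> - \<eta> *\<^sub>R V'), X j t \<omega>, V'))"
  by (simp add: state_def X_def Y_def V_def split: prod.split)

lemma Y_Suc: "Y j (Suc t) \<omega> = X j t \<omega>"
  by (simp add: Y_def state_Suc Let_def)

lemma V_Suc: "V j (Suc t) \<omega> =
    (\<Sum>i\<in>\<omega> ((j - 1) * m + t). (1 / (real n * samp_p Sd i)) *\<^sub>R (g i (X j t \<omega>) - g i (Y j t \<omega>))) + V j t \<omega>"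
  by (simp add: V_def state_Suc Let_def)

lemma X_Suc: "X j (Suc t) \<omega> = px (Y j (Suc t) \<omega> - \<eta> *\<^sub>R V j (Suc t) \<omega>)"
  unfolding Y_Suc V_Suc by (simp only: X_def[of j "Suc t" \<omega>] state_Suc Let_def fst_conv)

lemma state_0: "state j 0 \<omega> = (snapshot \<omega> (j - 1), snapshot \<omega> (j - 1), grad_f (snapshot \<omega> (j - 1)))"
  unfolding state_def grad_f_def by (simp only: sarah_inner.simps(1))

lemma X_0: "X j 0 \<omega> = snapshot \<omega> (j - 1)" and e_0: "e j 0 \<omega> = 0" and d_0: "d j 0 \<omega> = 0"
  by (simp_all only: X_def Y_def V_def e_def d_def state_0 fst_conv snd_conv diff_self)

lemma snapshot_eq_X: "j \<ge> 1 \<Longrightarrow> snapshot \<omega> j = X j m \<omega>"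
  by (cases j) (simp_all add: snapshot_def X_def state_def)

lemma e_Suc: "e j (Suc t) \<omega> = e j t \<omega> +
    ((\<Sum>i\<in>\<omega> ((j - 1) * m + t). (1 / (real n * samp_p Sd i)) *\<^sub>R (g i (X j t \<omega>) - g i (Y j t \<omega>)))
     - (1 / real n) *\<^sub>R (\<Sum>i<n. g i (X j t \<omega>) - g i (Y j t \<omega>)))"
  by (simp add: e_def V_Suc Y_Suc grad_f_def sum_subtractf scaleR_diff_right algebra_simps)

lemma state_fun_upd_future: "state j t (fun_upd \<omega> ((j - 1) * m + t) y) = state j t \<omega>"
proof -
  have snapshot: "snapshot (fun_upd \<omega> ((j - 1) * m + t) y) (j - 1) = snapshot \<omega> (j - 1)"
    unfolding snapshot_def by (intro sarah_outer_cong) auto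
  have past: "(fun_upd \<omega> ((j - 1) * m + t) y) ((j - 1) * m + (s - 1)) = \<omega> ((j - 1) * m + (s - 1))"
    if "1 \<le> s" "s \<le> t" for s
    using that by (cases s) auto
  have "sarah_inner g n (samp_p Sd) \<eta> px (\<lambda>s. (fun_upd \<omega> ((j - 1) * m + t) y) ((j - 1) * m + (s - 1))) x0 t
      = sarah_inner g n (samp_p Sd) \<eta> px (\<lambda>s. \<omega> ((j - 1) * m + (s - 1))) x0 t" for x0
    by (rule sarah_inner_cong) (erule (1) past)
  then show ?thesis
    unfolding state_def snapshot by (simp only:)
qed

lemma step_decrease:
  assumes "t \<ge> 1"
  shows "F (X j t \<omega>) \<le> F (Y j t \<omega>) - inner (d j t \<omega>) (e j t \<omega>) - (K / 2 - Lt / 2) * (norm (d j t \<omega>))^2"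
proof -
  obtain s where t: "t = Suc s" using assms by (cases t) auto
  have "X j t \<omega> \<in> prox_set \<eta> r (Y j t \<omega> - \<eta> *\<^sub>R V j t \<omega>)"
    unfolding t X_Suc by (rule prox)
  moreover have "f_avg (X j t \<omega>) \<le> f_avg (Y j t \<omega>) + inner (grad_f (Y j t \<omega>)) (X j t \<omega> - Y j t \<omega>)
      + Lt / 2 * (norm (X j t \<omega> - Y j t \<omega>))^2"
    using f_avg_taylor_bound[of "X j t \<omega>" "Y j t \<omega>"] unfolding abs_le_iff by linarith
  ultimately show ?thesis
    using prox_gradient_step_decrease[OF _ _ eta_pos] unfolding F_eq d_def e_def inverse_eta by blast
qed

lemma step_subgradient:
  assumes "t \<ge> 1"
  shows "w j t \<omega> \<in> frechet_subdiff F (X j t \<omega>)"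
proof -
  obtain s where t: "t = Suc s" using assms by (cases t) auto
  have "X j t \<omega> \<in> prox_set \<eta> r (Y j t \<omega> - \<eta> *\<^sub>R V j t \<omega>)"
    unfolding t X_Suc by (rule prox)
  moreover have "f_avg z \<ge> f_avg (X j t \<omega>) + inner (grad_f (X j t \<omega>)) (z - X j t \<omega>)
      - Lt / 2 * (norm (z - X j t \<omega>))^2" for z
    using f_avg_taylor_bound[of z "X j t \<omega>"] unfolding abs_le_iff by linarith
  ultimately show ?thesis
    using prox_gradient_step_subgradient[OF _ _ eta_pos] unfolding F_eq w_def d_def inverse_eta by blast
qed

lemma dist0_subdiff_le_norm_w:
  "t \<ge> 1 \<Longrightarrow> (dist0 (frechet_subdiff F (X j t \<omega>)))^2 \<le> ennreal ((norm (w j t \<omega>))^2)"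
  using step_subgradient by (rule dist0_power2_le)

lemma norm_w_bound:
  assumes "t \<ge> 1"
  shows "(norm (w j t \<omega>))^2 \<le> (1 + Lt / K) * ((norm (e j t \<omega>))^2 + 2 * K * (F (Y j t \<omega>) - F (X j t \<omega>))
            + Lt * K * (norm (d j t \<omega>))^2) + (1 + K / Lt) * Lt^2 * (norm (d j t \<omega>))^2"
proof -
  have "w j t \<omega> = (grad_f (X j t \<omega>) - grad_f (Y j t \<omega>)) - (e j t \<omega> + K *\<^sub>R d j t \<omega>)"
    by (simp add: w_def e_def)
  then show ?thesis
    using step_subgradient_bound[OF K_pos Lt_pos step_decrease[OF assms]] grad_f_lipschitz
    by (simp add: d_def)
qed

lemma step_gain:
  "t \<ge> 1 \<Longrightarrow> F (Y j t \<omega>) - F (X j t \<omega>) \<ge> - ((norm (e j t \<omega>))^2 / (2 * Lt)) + (K / 2 - Lt) * (norm (d j t \<omega>))^2"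
  by (rule step_gain_lower_bound[OF Lt_pos step_decrease])

abbreviation "\<Omega> \<equiv> Pi_pmf {..<J * m} {} (\<lambda>_. Sd)"

abbreviation E :: "((nat \<Rightarrow> nat set) \<Rightarrow> real) \<Rightarrow> real" where
  "E h \<equiv> measure_pmf.expectation \<Omega> h"

lemma finite_set_pmf_Sd: "finite (set_pmf Sd)"
  using samp_sub by (rule finite_subset) simp

lemma integrable_\<Omega> [simp]: "integrable (measure_pmf \<Omega>) (h :: _ \<Rightarrow> real)"
  using finite_set_pmf_Sd
  by (intro integrable_measure_pmf_finite) (auto simp: set_Pi_pmf intro!: finite_PiE_dflt)

lemma nn_integral_\<Omega>: "(\<And>\<omega>. 0 \<le> h \<omega>) \<Longrightarrow> (\<integral>\<^sup>+\<omega>. ennreal (h \<omega>) \<partial>measure_pmf \<Omega>) = ennreal (E h)"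
  by (intro nn_integral_eq_integral) auto

lemma sampled_difference_variance:
  "(\<Sum>i<n. v i * (norm (g i x - g i y))^2 / (samp_p Sd i * (real n)^2)) \<le> Q * (norm (x - y))^2"
proof -
  have "v i * (norm (g i x - g i y))^2 / (samp_p Sd i * (real n)^2)
      \<le> v i * (L i)^2 / (samp_p Sd i * (real n)^2) * (norm (x - y))^2" if "i < n" for i
  proof -
    have "(norm (g i x - g i y))^2 \<le> (L i)^2 * (norm (x - y))^2"
      using lip[OF that, of x y] by (simp flip: power_mult_distrib add: power_mono)
    then show ?thesis
      using v_nonneg[OF that] proper[OF that]
      by (auto simp: field_simps intro!: divide_right_mono mult_left_mono)
  qed
  then show ?thesis
    unfolding Q_def sum_distrib_right by (intro sum_mono) auto
qed

lemma estimator_error_step: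
  assumes j: "1 \<le> j" "j \<le> J" and t: "t < m"
  shows "E (\<lambda>\<omega>. (norm (e j (Suc t) \<omega>))^2) \<le> E (\<lambda>\<omega>. (norm (e j t \<omega>))^2) + Q * E (\<lambda>\<omega>. (norm (d j t \<omega>))^2)"
proof -
  define k where "k = (j - 1) * m + t"
  have "(j - 1) * m + m = j * m" using j by (cases j) auto
  also have "\<dots> \<le> J * m" using j by simp
  finally have k: "k \<in> {..<J * m}" using t unfolding k_def by simp
  define b where "b \<omega> i = g i (X j t \<omega>) - g i (Y j t \<omega>)" for \<omega> i
  define Z where "Z \<omega> S = e j t \<omega> + ((\<Sum>i\<in>S. (1 / (real n * samp_p Sd i)) *\<^sub>R b \<omega> i)
      - (1 / real n) *\<^sub>R (\<Sum>i<n. b \<omega> i))" for \<omega> S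
  define \<phi> where "\<phi> \<omega> S = ennreal ((norm (Z \<omega> S))^2)" for \<omega> S
  \<comment> \<open>The sample used in this update is coordinate \<open>k\<close> of \<open>\<omega>\<close>, on which the state at step \<open>t\<close> does
    not depend; integrating it out first is where the ESO bound enters.\<close>
  have fresh: "\<phi> (fun_upd \<omega> k y) = \<phi> \<omega>" for \<omega> y
    unfolding \<phi>_def Z_def b_def e_def X_def Y_def V_def k_def state_fun_upd_future ..
  have "ennreal (E (\<lambda>\<omega>. (norm (e j (Suc t) \<omega>))^2)) = (\<integral>\<^sup>+\<omega>. \<phi> \<omega> (\<omega> k) \<partial>measure_pmf \<Omega>)"
    by (simp add: nn_integral_\<Omega>[symmetric] \<phi>_def Z_def b_def e_Suc k_def)
  also have "\<dots> = (\<integral>\<^sup>+\<omega>. (\<integral>\<^sup>+S. \<phi> \<omega> S \<partial>measure_pmf Sd) \<partial>measure_pmf \<Omega>)"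
    by (rule nn_integral_Pi_pmf_fresh_coordinate[OF _ k fresh]) simp
  also have "\<dots> \<le> (\<integral>\<^sup>+\<omega>. ennreal ((norm (e j t \<omega>))^2 + Q * (norm (d j t \<omega>))^2) \<partial>measure_pmf \<Omega>)"
  proof (rule nn_integral_mono)
    fix \<omega>
    have "(\<integral>\<^sup>+S. \<phi> \<omega> S \<partial>measure_pmf Sd) = ennreal (measure_pmf.expectation Sd (\<lambda>S. (norm (Z \<omega> S))^2))"
      unfolding \<phi>_def using finite_set_pmf_Sd
      by (intro nn_integral_eq_integral) (auto intro: integrable_measure_pmf_finite)
    also have "measure_pmf.expectation Sd (\<lambda>S. (norm (Z \<omega> S))^2)
        \<le> (norm (e j t \<omega>))^2 + (\<Sum>i<n. v i * (norm (b \<omega> i))^2 / (samp_p Sd i * (real n)^2))"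
      unfolding Z_def by (rule sampling_estimator_variance[OF samp_sub proper ESO])
    also have "\<dots> \<le> (norm (e j t \<omega>))^2 + Q * (norm (d j t \<omega>))^2"
      using sampled_difference_variance unfolding b_def d_def by simp
    finally show "(\<integral>\<^sup>+S. \<phi> \<omega> S \<partial>measure_pmf Sd) \<le> ennreal ((norm (e j t \<omega>))^2 + Q * (norm (d j t \<omega>))^2)"
      by (simp add: ennreal_leI)
  qed
  also have "\<dots> = ennreal (E (\<lambda>\<omega>. (norm (e j t \<omega>))^2) + Q * E (\<lambda>\<omega>. (norm (d j t \<omega>))^2))"
    using Q_nonneg by (subst nn_integral_\<Omega>) auto
  finally show ?thesis
    using Q_nonneg by (subst (asm) ennreal_le_iff) (auto intro!: add_nonneg_nonneg mult_nonneg_nonneg)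
qed

lemma estimator_error_bound:
  assumes j: "1 \<le> j" "j \<le> J"
  shows "t \<le> m \<Longrightarrow> E (\<lambda>\<omega>. (norm (e j t \<omega>))^2) \<le> Q * (\<Sum>s<t. E (\<lambda>\<omega>. (norm (d j s \<omega>))^2))"
proof (induction t)
  case (Suc t)
  have "E (\<lambda>\<omega>. (norm (e j (Suc t) \<omega>))^2) \<le> E (\<lambda>\<omega>. (norm (e j t \<omega>))^2) + Q * E (\<lambda>\<omega>. (norm (d j t \<omega>))^2)"
    using Suc.prems j by (intro estimator_error_step) auto
  also have "\<dots> \<le> Q * (\<Sum>s<Suc t. E (\<lambda>\<omega>. (norm (d j s \<omega>))^2))"
    using Suc by (simp add: distrib_left)
  finally show ?case .
qed (simp add: e_0)

lemma epoch_estimator_error_bound: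
  assumes j: "1 \<le> j" "j \<le> J"
  shows "(\<Sum>t=1..m. E (\<lambda>\<omega>. (norm (e j t \<omega>))^2)) \<le> real m * Q * (\<Sum>t=1..m. E (\<lambda>\<omega>. (norm (d j t \<omega>))^2))"
proof -
  define D where "D = (\<Sum>t=1..m. E (\<lambda>\<omega>. (norm (d j t \<omega>))^2))"
  have "E (\<lambda>\<omega>. (norm (e j t \<omega>))^2) \<le> Q * D" if t: "t \<in> {1..m}" for t
  proof -
    have "(\<Sum>s<t. E (\<lambda>\<omega>. (norm (d j s \<omega>))^2)) \<le> (\<Sum>s\<in>{0..m}. E (\<lambda>\<omega>. (norm (d j s \<omega>))^2))"
      using t by (intro sum_mono2) auto
    also have "\<dots> = D"
      unfolding D_def by (simp add: sum.atLeast_Suc_atMost d_0)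
    finally show ?thesis
      using order_trans[OF estimator_error_bound[OF j, of t] mult_left_mono[OF _ Q_nonneg]] t by simp
  qed
  then have "(\<Sum>t=1..m. E (\<lambda>\<omega>. (norm (e j t \<omega>))^2)) \<le> (\<Sum>t=1..m. Q * D)"
    by (rule sum_mono)
  then show ?thesis unfolding D_def by simp
qed

lemma epoch_telescope:
  assumes "1 \<le> j"
  shows "(\<Sum>t=1..m. F (Y j t \<omega>) - F (X j t \<omega>)) = F (snapshot \<omega> (j - 1)) - F (snapshot \<omega> j)"
proof -
  have "(\<Sum>t=1..m. F (Y j t \<omega>) - F (X j t \<omega>)) = - (\<Sum>t=1..m. F (Y j (Suc t) \<omega>) - F (Y j t \<omega>))"
    by (simp add: Y_Suc sum_negf[symmetric])
  also have "(\<Sum>t=1..m. F (Y j (Suc t) \<omega>) - F (Y j t \<omega>)) = F (Y j (Suc m) \<omega>) - F (Y j 1 \<omega>)"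
    by (rule sum_Suc_diff) simp
  also have "Y j (Suc m) \<omega> = snapshot \<omega> j" using snapshot_eq_X[OF assms] by (simp add: Y_Suc)
  also have "Y j 1 \<omega> = snapshot \<omega> (j - 1)" using Y_Suc[of j 0 \<omega>] by (simp add: X_0)
  finally show ?thesis by simp
qed

lemma epoch_bound:
  assumes j: "1 \<le> j" "j \<le> J"
  shows "(\<Sum>t=1..m. E (\<lambda>\<omega>. (norm (w j t \<omega>))^2))
     \<le> (24 * Lt + 4 * real m * Q / Lt) * (E (\<lambda>\<omega>. F (snapshot \<omega> (j - 1))) - E (\<lambda>\<omega>. F (snapshot \<omega> j)))"
proof -
  define a where "a = (\<Sum>t=1..m. E (\<lambda>\<omega>. (norm (e j t \<omega>))^2))"
  define D where "D = (\<Sum>t=1..m. E (\<lambda>\<omega>. (norm (d j t \<omega>))^2))"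
  define \<delta> where "\<delta> = (\<Sum>t=1..m. E (\<lambda>\<omega>. F (Y j t \<omega>) - F (X j t \<omega>)))"
  have "\<delta> = E (\<lambda>\<omega>. \<Sum>t=1..m. F (Y j t \<omega>) - F (X j t \<omega>))"
    unfolding \<delta>_def by (simp add: integral_sum)
  also have "\<dots> = E (\<lambda>\<omega>. F (snapshot \<omega> (j - 1))) - E (\<lambda>\<omega>. F (snapshot \<omega> j))"
    by (simp only: epoch_telescope[OF j(1)]) simp
  finally have "\<delta> = E (\<lambda>\<omega>. F (snapshot \<omega> (j - 1))) - E (\<lambda>\<omega>. F (snapshot \<omega> j))" .
  moreover have "(\<Sum>t=1..m. E (\<lambda>\<omega>. (norm (w j t \<omega>))^2)) \<le> (24 * Lt + 4 * (real m * Q) / Lt) * \<delta>"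
  proof (rule epoch_residual_arith[OF Lt_pos _ K_def[unfolded mult.assoc]])
    show "0 \<le> real m * Q" using Q_nonneg by simp
    show "0 \<le> D" "0 \<le> a" unfolding D_def a_def by (auto intro!: sum_nonneg)
    show "a \<le> real m * Q * D" unfolding a_def D_def by (rule epoch_estimator_error_bound[OF j])
    have "\<delta> \<ge> (\<Sum>t=1..m. E (\<lambda>\<omega>. - ((norm (e j t \<omega>))^2 / (2 * Lt)) + (K / 2 - Lt) * (norm (d j t \<omega>))^2))"
      unfolding \<delta>_def by (intro sum_mono integral_mono step_gain) auto
    then show "\<delta> \<ge> - (a / (2 * Lt)) + (K / 2 - Lt) * D"
      unfolding a_def D_def by (simp add: sum.distrib sum_distrib_left sum_divide_distrib sum_negf sum_subtractf)
    have "(\<Sum>t=1..m. E (\<lambda>\<omega>. (norm (w j t \<omega>))^2)) \<le> (\<Sum>t=1..m. E (\<lambda>\<omega>. (1 + Lt / K) * ((norm (e j t \<omega>))^2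
        + 2 * K * (F (Y j t \<omega>) - F (X j t \<omega>)) + Lt * K * (norm (d j t \<omega>))^2) + (1 + K / Lt) * Lt^2 * (norm (d j t \<omega>))^2))"
      by (intro sum_mono integral_mono norm_w_bound) auto
    then show "(\<Sum>t=1..m. E (\<lambda>\<omega>. (norm (w j t \<omega>))^2)) \<le> (1 + Lt / K) * (a + 2 * K * \<delta> + Lt * K * D) + (1 + K / Lt) * Lt^2 * D"
      unfolding a_def D_def \<delta>_def
      by (simp add: sum.distrib sum_distrib_left distrib_left right_diff_distrib sum_subtractf)
  qed
  ultimately show ?thesis by (simp add: mult.assoc)
qed

lemma expected_dist0_le:
  assumes "t \<ge> 1"
  shows "(\<integral>\<^sup>+\<omega>. (dist0 (frechet_subdiff F (sarah_iter g n (samp_p Sd) \<eta> px m \<omega> x1 j t)))^2 \<partial>measure_pmf \<Omega>)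
    \<le> ennreal (E (\<lambda>\<omega>. (norm (w j t \<omega>))^2))"
proof -
  have "sarah_iter g n (samp_p Sd) \<eta> px m \<omega> x1 j t = X j t \<omega>" for \<omega>
    by (simp add: sarah_iter_def X_def state_def snapshot_def)
  then have "(\<integral>\<^sup>+\<omega>. (dist0 (frechet_subdiff F (sarah_iter g n (samp_p Sd) \<eta> px m \<omega> x1 j t)))^2 \<partial>measure_pmf \<Omega>)
      \<le> (\<integral>\<^sup>+\<omega>. ennreal ((norm (w j t \<omega>))^2) \<partial>measure_pmf \<Omega>)"
    using dist0_subdiff_le_norm_w[OF assms] by (intro nn_integral_mono) simp
  then show ?thesis by (simp add: nn_integral_\<Omega>)
qed

lemma sum_expected_dist0_le:
  assumes xstar: "\<And>x. F xstar \<le> F x"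
  shows "(\<Sum>j\<in>{1..J}. \<Sum>t\<in>{1..m}.
            \<integral>\<^sup>+\<omega>. (dist0 (frechet_subdiff F (sarah_iter g n (samp_p Sd) \<eta> px m \<omega> x1 j t)))^2 \<partial>measure_pmf \<Omega>)
    \<le> ennreal ((24 * Lt + 4 * real m * Q / Lt) * (F x1 - F xstar))"
proof -
  define C where "C = 24 * Lt + 4 * real m * Q / Lt"
  define \<Phi> where "\<Phi> j = E (\<lambda>\<omega>. F (snapshot \<omega> j))" for j
  have "C \<ge> 0" unfolding C_def using Lt_pos Q_nonneg by simp
  have "(\<Sum>j\<in>{1..J}. \<Sum>t\<in>{1..m}.
            \<integral>\<^sup>+\<omega>. (dist0 (frechet_subdiff F (sarah_iter g n (samp_p Sd) \<eta> px m \<omega> x1 j t)))^2 \<partial>measure_pmf \<Omega>)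
      \<le> (\<Sum>j\<in>{1..J}. \<Sum>t\<in>{1..m}. ennreal (E (\<lambda>\<omega>. (norm (w j t \<omega>))^2)))"
    by (intro sum_mono expected_dist0_le) auto
  also have "\<dots> = ennreal (\<Sum>j\<in>{1..J}. \<Sum>t\<in>{1..m}. E (\<lambda>\<omega>. (norm (w j t \<omega>))^2))"
    by (simp add: sum_nonneg)
  also have "\<dots> \<le> ennreal (\<Sum>j\<in>{1..J}. C * (\<Phi> (j - 1) - \<Phi> j))"
    unfolding C_def \<Phi>_def by (intro ennreal_leI sum_mono epoch_bound) auto
  also have "(\<Sum>j\<in>{1..J}. C * (\<Phi> (j - 1) - \<Phi> j)) = C * (\<Phi> 0 - \<Phi> J)"
    by (induction J) (simp_all add: algebra_simps)
  also have "\<dots> \<le> C * (F x1 - F xstar)"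
  proof -
    have "\<Phi> 0 = F x1" by (simp add: \<Phi>_def snapshot_def)
    moreover have "F xstar \<le> \<Phi> J"
      using integral_mono[of \<Omega> "\<lambda>_. F xstar" "\<lambda>\<omega>. F (snapshot \<omega> J)"] xstar by (simp add: \<Phi>_def)
    ultimately show ?thesis using \<open>C \<ge> 0\<close> by (intro mult_left_mono) auto
  qed
  finally show ?thesis unfolding C_def by (simp add: ennreal_leI)
qed

end

theorem theorem5p4:
  fixes n m J :: nat
    and f :: "nat \<Rightarrow> 'a::euclidean_space \<Rightarrow> real"
    and g :: "nat \<Rightarrow> 'a \<Rightarrow> 'a"
    and G L v :: "nat \<Rightarrow> real"
    and r :: "'a \<Rightarrow> real"
    and px :: "'a \<Rightarrow> 'a"
    and Sd :: "nat set pmf"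
    and x1 xstar :: 'a
    and F :: "'a \<Rightarrow> real"
    and Lt Q \<eta> :: real
  assumes grad: "\<And>i x. i < n \<Longrightarrow> (f i has_derivative (\<lambda>h. inner (g i x) h)) (at x)"
    and bdd: "\<And>i x. i < n \<Longrightarrow> norm (g i x) \<le> G i"
    and lip: "\<And>i x y. i < n \<Longrightarrow> norm (g i x - g i y) \<le> L i * norm (x - y)"
    and F_def: "F = (\<lambda>x. (1 / real n) * (\<Sum>i<n. f i x) + r x)"
    and xstar: "\<And>x. F xstar \<le> F x"
    and Lt_def: "Lt = (1 / real n) * (\<Sum>i<n. L i)"
    and Lt_pos: "Lt > 0"
    and samp_sub: "set_pmf Sd \<subseteq> Pow {..<n}"
    and proper: "\<And>i. i < n \<Longrightarrow> samp_p Sd i > 0"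
    and ESO: "psd_le n (\<lambda>i j. samp_P Sd i j - samp_p Sd i * samp_p Sd j)
                       (\<lambda>i j. if i = j then samp_p Sd i * v i else 0)"
    and Q_def: "Q = (\<Sum>i<n. v i * (L i)^2 / (samp_p Sd i * (real n)^2))"
    and eta_def: "\<eta> = 1 / (4 * Lt + 2 * real m * Q / Lt)"
    and prox: "\<And>y. px y \<in> prox_set \<eta> r y"
    and m_pos: "m \<ge> 1" and J_pos: "J \<ge> 1"
  shows "ennreal (1 / (real m * real J)) *
           (\<Sum>j\<in>{1..J}. \<Sum>t\<in>{1..m}.
              \<integral>\<^sup>+ \<omega>. (dist0 (frechet_subdiff F
                     (sarah_iter g n (samp_p Sd) \<eta> px m \<omega> x1 j t)))^2
                \<partial>(measure_pmf (Pi_pmf {..<J * m} {} (\<lambda>_. Sd))))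
         \<le> ennreal ((1 / (real m * real J)) * (24 * Lt + 4 * real m * Q / Lt) * (F x1 - F xstar))"
proof -
  interpret prox_sarah n m J f g L v r px Sd x1 F Lt Q \<eta>
    using grad lip F_def Lt_def Lt_pos samp_sub proper ESO Q_def eta_def prox
    by unfold_locales auto
  have "0 \<le> (24 * Lt + 4 * real m * Q / Lt) * (F x1 - F xstar)"
    using Lt_pos Q_nonneg xstar[of x1] by simp
  from ennreal_mult''[OF this, of "1 / (real m * real J)", symmetric]
    mult_left_mono[OF sum_expected_dist0_le[OF xstar], of "ennreal (1 / (real m * real J))"]
  show ?thesis by (simp only: mult.assoc zero_le)
qed

end
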